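(* Let $G_1$ and $G_2$ be two vertex-disjoint 2-edge-colored graphs with Hamiltonian alternating cycles $C_1=x_0x_1\cdots x_{2n-1}x_0$ and $C_2=y_0y_1\cdots y_{2m-1}y_0$, respectively, and let $G\in G_1\oplus G_2$. Suppose there is no good pair in $G$ (between $C_1$ and $C_2$), and that for each $i\in\{1,2\}$ there is a vertex of $C_i$ which is non-singular with respect to $C_{3-i}$. Let $m_1=\min\{n,m\}$ and $M_2=\max\{n,m\}$. Then for each vertex $v\in V(G)$ and each even integer $\ell\in[4,4m_1]\cup[2M_2,2n+2m]$, there is an alternating cycle of length $\ell$ in $G$ passing through $v$.
   Context: All graphs are simple, with edges colored red or blue. An alternating cycle is a cycle in which consecutive edges have different colors; a Hamiltonian alternating cycle of a graph is an alternating cycle through all its vertices. For vertex-disjoint 2-edge-colored graphs $G_1,G_2$, the colored generalized sum $G_1\oplus G_2$ is the set of 2-edge-colored graphs $G$ with $V(G)=V(G_1)\cup V(G_2)$, $G\langle V(G_i)\rangle=G_i$ with the same coloring, and exactly one edge (of arbitrary fixed color) between each $u\in V(G_1)$ and $w\in V(G_2)$; these latter edges are the exterior edges. For $v$ on an alternating cycle $C$, $v^r$ (resp. $v^b$) is the neighbor of $v$ on $C$ with $vv^r$ red (resp. $vv^b$ blue). For an exterior edge $vw$ with $v\in V(C_1)$, $w\in V(C_2)$: if $vw$ is red, $vw,v^rw^r$ is a good pair if $v^rw^r$ is red; if $vw$ is blue, $vw,v^bw^b$ is a good pair if $v^bw^b$ is blue. A vertex $v\in V(C_i)$ is singular with respect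 to $C_{3-i}$ if all edges between $v$ and $V(C_{3-i})$ have the same color, and non-singular otherwise. For integers $a\le b$, $[a,b]=\{a,a+1,\dots,b\}$. *)

theory Defs
  imports Main
begin

datatype color = Red | Blue

text \<open>A 2-edge-colored simple graph on vertex set V: c u v = Some k iff uv is an edge of colour k.\<close>
definition colgraph :: "'a set \<Rightarrow> ('a \<Rightarrow> 'a \<Rightarrow> color option) \<Rightarrow> bool" where
  "colgraph V c \<longleftrightarrow> finite V \<and> (\<forall>u v. c u v = c v u) \<and> (\<forall>v. c v v = None) \<and>
     (\<forall>u v. c u v \<noteq> None \<longrightarrow> u \<in> V \<and> v \<in> V)"

definition alt_cycle :: "('a \<Rightarrow> 'a \<Rightarrow> color option) \<Rightarrow> 'a list \<Rightarrow> bool" where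
  "alt_cycle c xs \<longleftrightarrow> distinct xs \<and> length xs \<ge> 3 \<and>
     (\<forall>i < length xs. c (xs ! i) (xs ! ((i + 1) mod length xs)) \<noteq> None) \<and>
     (\<forall>i < length xs. c (xs ! i) (xs ! ((i + 1) mod length xs)) \<noteq>
                      c (xs ! ((i + 1) mod length xs)) (xs ! ((i + 2) mod length xs)))"

text \<open>u is the neighbour of v on the cycle xs joined to v by an edge of colour k (u = v^k).\<close>
definition cyc_nbr :: "('a \<Rightarrow> 'a \<Rightarrow> color option) \<Rightarrow> 'a list \<Rightarrow> color \<Rightarrow> 'a \<Rightarrow> 'a \<Rightarrow> bool" where
  "cyc_nbr c xs k v u \<longleftrightarrow> (\<exists>i < length xs. xs ! i = v \<and>
     (u = xs ! ((i + 1) mod length xs) \<or> u = xs ! ((i + length xs - 1) mod length xs)) \<and>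
     c v u = Some k)"

definition in_colored_sum ::
  "'a set \<Rightarrow> ('a \<Rightarrow> 'a \<Rightarrow> color option) \<Rightarrow> 'a set \<Rightarrow> ('a \<Rightarrow> 'a \<Rightarrow> color option) \<Rightarrow>
   'a set \<Rightarrow> ('a \<Rightarrow> 'a \<Rightarrow> color option) \<Rightarrow> bool" where
  "in_colored_sum V c V1 c1 V2 c2 \<longleftrightarrow> colgraph V c \<and> V = V1 \<union> V2 \<and>
     (\<forall>u \<in> V1. \<forall>v \<in> V1. c u v = c1 u v) \<and> (\<forall>u \<in> V2. \<forall>v \<in> V2. c u v = c2 u v) \<and>
     (\<forall>u \<in> V1. \<forall>w \<in> V2. c u w \<noteq> None)"

definition no_good_pair ::
  "('a \<Rightarrow> 'a \<Rightarrow> color option) \<Rightarrow> 'a list \<Rightarrow> 'a list \<Rightarrow> bool" where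
  "no_good_pair c C1 C2 \<longleftrightarrow> (\<forall>v w v' w' k. v \<in> set C1 \<longrightarrow> w \<in> set C2 \<longrightarrow> c v w = Some k \<longrightarrow>
      cyc_nbr c C1 k v v' \<longrightarrow> cyc_nbr c C2 k w w' \<longrightarrow> c v' w' \<noteq> Some k)"

definition non_singular :: "('a \<Rightarrow> 'a \<Rightarrow> color option) \<Rightarrow> 'a \<Rightarrow> 'a set \<Rightarrow> bool" where
  "non_singular c v W \<longleftrightarrow> (\<exists>w \<in> W. \<exists>w' \<in> W. c v w = Some Red \<and> c v w' = Some Blue)"

end

theory Submission
  imports Defs
begin

text \<open>
  Index both cycles by the integers, as periodic sequences x and y in which the edge
  {x i, x (i + 1)} has colour alt_color p i and {y j, y (j + 1)} has colour alt_color q j.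
  Call an exterior edge {x i, y j} in phase if these two cycle edges have the same colour; it is
  an A-pair if it has that colour as well, and a B-pair otherwise. The absence of good pairs says
  exactly that an A-pair at (i, j) is followed by an A-pair at (i + 1, j + 1), so by periodicity
  both kinds of pairs are invariant under diagonal shifts. A non-singular vertex on each side
  forces, after reversing C2 if necessary, both kinds of in-phase pairs to occur; hence every x a
  has an A-pair y j next to a B-pair y (j + D), for D = 2 and for D = -2. An A-pair at (a, j) and
  a B-pair at (a, j + k1 - k2) close the alternating cycle
  x a, ..., x (a + k1 - 1), y (j + k1 - 1), ..., y (j + k1 - k2),
  and every admissible length other than 2n + 2m splits as k1 + k2 with k1 - k2 congruent to
  2 or -2 modulo 2n and 2m. The Hamiltonian cycle is glued from two such blocks, using one
  transition of each sign.
\<close>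

section \<open>Alternating paths\<close>

fun flip :: "color \<Rightarrow> color" where
  "flip Red = Blue" | "flip Blue = Red"

definition alt_color :: "color \<Rightarrow> int \<Rightarrow> color" where
  "alt_color p i = (if even i then p else flip p)"

lemma flip_flip [simp]: "flip (flip k) = k"
  by (cases k) auto

lemma flip_neq [simp]: "flip k \<noteq> k" "k \<noteq> flip k"
  by (cases k; simp)+

lemma color_neq_iff_flip: "k \<noteq> k' \<longleftrightarrow> k' = flip k"
  by (cases k; cases k') auto

lemma option_color_flip: "x \<noteq> None \<Longrightarrow> x \<noteq> Some k \<Longrightarrow> x = Some (flip k)"
  by (cases x) (auto simp: color_neq_iff_flip[symmetric])

lemma alt_color_0 [simp]: "alt_color p 0 = p"
  by (simp add: alt_color_def)

lemma alt_color_eq_iff: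
  "alt_color p i = alt_color q j \<longleftrightarrow> (p = q \<longleftrightarrow> (even i \<longleftrightarrow> even j))"
  unfolding alt_color_def by (cases p; cases q) auto

lemma alt_color_add: "alt_color (alt_color p a) b = alt_color p (a + b)"
  by (auto simp: alt_color_def)

lemma flip_alt_color: "flip (alt_color p i) = alt_color p (i + 1)"
  by (auto simp: alt_color_def)

lemma alt_color_flip: "alt_color (flip p) i = alt_color p (i + 1)"
  by (auto simp: alt_color_def)

lemma alt_color_cong: "even (i - j) \<Longrightarrow> alt_color p i = alt_color p j"
  by (auto simp: alt_color_eq_iff)

lemma alt_color_eq_shift:
  "alt_color p i = alt_color q j \<Longrightarrow> even (d - d') \<Longrightarrow> alt_color p (i + d) = alt_color q (j + d')"
  by (cases p; cases q) (auto simp: alt_color_def split: if_splits)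

definition alt_path :: "('a \<Rightarrow> 'a \<Rightarrow> color option) \<Rightarrow> color \<Rightarrow> 'a list \<Rightarrow> bool" where
  "alt_path c p xs \<longleftrightarrow>
     (\<forall>t. Suc t < length xs \<longrightarrow> c (xs ! t) (xs ! Suc t) = Some (alt_color p (int t)))"

lemma alt_path_append:
  assumes xs: "alt_path c p xs" "xs \<noteq> []"
    and ys: "alt_path c (alt_color p (int (length xs))) ys"
    and link: "c (last xs) (hd ys) = Some (alt_color p (int (length xs) - 1))"
  shows "alt_path c p (xs @ ys)"
  unfolding alt_path_def
proof (intro allI impI)
  fix t assume t: "Suc t < length (xs @ ys)"
  consider "Suc t < length xs" | "Suc t = length xs" | "length xs \<le> t" by linarith
  then show "c ((xs @ ys) ! t) ((xs @ ys) ! Suc t) = Some (alt_color p (int t))"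
  proof cases
    case 1
    then show ?thesis using xs(1) by (simp add: alt_path_def nth_append)
  next
    case 2
    then have "last xs = xs ! t" "int t = int (length xs) - 1" "ys \<noteq> []"
      using xs(2) t 2[symmetric] by (auto simp: last_conv_nth)
    then show ?thesis using 2[symmetric] link by (simp add: nth_append hd_conv_nth)
  next
    case 3
    then have "c (ys ! (t - length xs)) (ys ! Suc (t - length xs)) =
        Some (alt_color p (int (length xs) + int (t - length xs)))"
      using ys t by (simp add: alt_path_def alt_color_add)
    then show ?thesis using 3 by (simp add: nth_append Suc_diff_le)
  qed
qed

lemma alt_path_rev:
  assumes sym: "\<And>u v. c u v = c v u" and xs: "alt_path c p xs"
  shows "alt_path c (alt_color p (int (length xs))) (rev xs)"
  unfolding alt_path_def
proof (intro allI impI)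
  fix t assume t: "Suc t < length (rev xs)"
  define s where "s = length xs - Suc (Suc t)"
  have s: "Suc s < length xs" "length xs - Suc t = Suc s" "length xs - Suc (Suc t) = s"
    using t by (auto simp: s_def)
  have "c (xs ! s) (xs ! Suc s) = Some (alt_color p (int s))"
    using xs s(1) by (simp add: alt_path_def)
  moreover have "alt_color p (int s) = alt_color p (int (length xs) + int t)"
    by (rule alt_color_cong) (use t in \<open>simp add: s_def\<close>)
  ultimately show "c (rev xs ! t) (rev xs ! Suc t) =
      Some (alt_color (alt_color p (int (length xs))) (int t))"
    using t s by (simp add: rev_nth alt_color_add sym[of "xs ! s"])
qed

lemma alt_cycle_of_path:
  assumes dist: "distinct xs" and len: "3 \<le> length xs" "even (length xs)"
    and path: "alt_path c p xs"
    and close: "c (last xs) (hd xs) = Some (alt_color p (int (length xs) - 1))"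
  shows "alt_cycle c xs"
proof -
  let ?L = "length xs"
  have edge: "c (xs ! t) (xs ! ((t + 1) mod ?L)) = Some (alt_color p (int t))" if "t < ?L" for t
  proof (cases "Suc t < ?L")
    case True
    then show ?thesis using path by (simp add: alt_path_def)
  next
    case False
    then have L: "?L = Suc t" using that by simp
    moreover have "xs \<noteq> []" using len by auto
    ultimately have "(t + 1) mod ?L = 0" "int t = int ?L - 1" "xs ! t = last xs" "xs ! 0 = hd xs"
      by (simp_all add: last_conv_nth hd_conv_nth)
    then show ?thesis using close by simp
  qed
  have parity: "even (int ((t + 1) mod ?L)) \<longleftrightarrow> even (int t + 1)" for t
  proof -
    have "even ((t + 1) mod ?L) \<longleftrightarrow> even (t + 1)"
      using len(2) by (simp add: even_iff_mod_2_eq_zero mod_mod_cancel)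
    then show ?thesis by simp
  qed
  show ?thesis
    unfolding alt_cycle_def
  proof (intro conjI allI impI)
    fix t assume t: "t < ?L"
    have t1: "(t + 1) mod ?L < ?L" using t by (intro mod_less_divisor) auto
    have "((t + 1) mod ?L + 1) mod ?L = (t + 2) mod ?L" by (simp add: mod_Suc_eq)
    then show "c (xs ! t) (xs ! ((t + 1) mod ?L)) \<noteq>
        c (xs ! ((t + 1) mod ?L)) (xs ! ((t + 2) mod ?L))"
      using edge[OF t] edge[OF t1] parity[of t] by (simp add: alt_color_eq_iff)
  qed (use dist len edge in auto)
qed

lemma alt_cycle_cong:
  assumes agree: "\<And>u v. u \<in> set xs \<Longrightarrow> v \<in> set xs \<Longrightarrow> c u v = c' u v"
    and cyc: "alt_cycle c' xs"
  shows "alt_cycle c xs"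
proof -
  have agree_nth: "c (xs ! i) (xs ! j) = c' (xs ! i) (xs ! j)"
    if "i < length xs" "j < length xs" for i j
    using agree that by simp
  have "xs \<noteq> []" using cyc by (auto simp: alt_cycle_def)
  then show ?thesis
    using cyc unfolding alt_cycle_def by (simp add: agree_nth)
qed

section \<open>Cycles as periodic integer sequences\<close>

definition segment :: "(int \<Rightarrow> 'a) \<Rightarrow> int \<Rightarrow> nat \<Rightarrow> 'a list" where
  "segment f a k = map (\<lambda>t. f (a + int t)) [0..<k]"

lemma length_segment [simp]: "length (segment f a k) = k"
  by (simp add: segment_def)

lemma nth_segment [simp]: "t < k \<Longrightarrow> segment f a k ! t = f (a + int t)"
  by (simp add: segment_def)

lemma segment_eq_Nil_iff [simp]: "segment f a k = [] \<longleftrightarrow> k = 0"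
  by (simp add: segment_def)

lemma hd_segment: "0 < k \<Longrightarrow> hd (segment f a k) = f a"
  by (simp add: segment_def upt_conv_Cons)

lemma last_segment: "0 < k \<Longrightarrow> last (segment f a k) = f (a + int k - 1)"
  by (cases k) (simp_all add: segment_def)

lemma segment_add: "segment f a (k + l) = segment f a k @ segment f (a + int k) l"
proof -
  have "[k..<k + l] = map (\<lambda>t. t + k) [0..<l]"
    by (simp add: map_add_upt add.commute)
  then show ?thesis by (simp add: segment_def upt_add_eq_append[of 0 k] algebra_simps)
qed

lemma set_segment: "set (segment f a k) = f ` {a..<a + int k}"
proof -
  have "{a..<a + int k} = (\<lambda>t. a + int t) ` {0..<k}"
    by (auto simp: image_iff intro!: bexI[of _ "nat (_ - a)"])
  then show ?thesis by (simp add: segment_def image_image)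
qed

lemma set_segment_subset: "set (segment f a k) \<subseteq> range f"
  by (auto simp: set_segment)

lemma alt_path_segment:
  assumes "\<And>i. c (f i) (f (i + 1)) = Some (alt_color p i)"
  shows "alt_path c (alt_color p a) (segment f a k)"
  unfolding alt_path_def
proof (intro allI impI)
  fix t assume "Suc t < length (segment f a k)"
  moreover have "a + int (Suc t) = (a + int t) + 1" by simp
  ultimately show "c (segment f a k ! t) (segment f a k ! Suc t) =
      Some (alt_color (alt_color p a) (int t))"
    using assms[of "a + int t"] by (simp only: nth_segment length_segment alt_color_add Suc_lessD)
qed

definition exact_period :: "(int \<Rightarrow> 'a) \<Rightarrow> nat \<Rightarrow> bool" where
  "exact_period f N \<longleftrightarrow> (\<forall>i i'. f i = f i' \<longleftrightarrow> i mod int N = i' mod int N)"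

lemma exact_period_eq_iff: "exact_period f N \<Longrightarrow> f i = f i' \<longleftrightarrow> i mod int N = i' mod int N"
  by (simp add: exact_period_def)

lemma exact_period_periodic: "exact_period f N \<Longrightarrow> f (i + int N * k) = f i"
  by (simp add: exact_period_def)

lemma exact_period_reflect: "exact_period f N \<Longrightarrow> exact_period (\<lambda>j. f (- j)) N"
  unfolding exact_period_def by (metis mod_minus_cong minus_minus)

lemma distinct_segment:
  assumes f: "exact_period f N" and k: "k \<le> N"
  shows "distinct (segment f a k)"
  unfolding distinct_conv_nth
proof (intro allI impI notI)
  fix t t' assume t: "t < length (segment f a k)" "t' < length (segment f a k)" "t \<noteq> t'"
    and eq: "segment f a k ! t = segment f a k ! t'"
  have "(a + int t) mod int N = (a + int t') mod int N"
    using eq t exact_period_eq_iff[OF f] by simp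
  then have "int N dvd (int t - int t')"
    by (metis add_diff_cancel_left mod_eq_dvd_iff)
  then have "int N \<le> \<bar>int t - int t'\<bar>"
    using dvd_imp_le_int[of "int t - int t'" "int N"] t(3) by simp
  then show False using t k by auto
qed

lemma set_segment_full_period:
  assumes f: "exact_period f N" and N: "0 < N"
  shows "set (segment f a N) = range f"
proof
  show "range f \<subseteq> set (segment f a N)"
  proof
    fix v assume "v \<in> range f"
    then obtain i where v: "v = f i" by auto
    define r where "r = (i - a) mod int N"
    have "0 \<le> r" "r < int N" using N by (simp_all add: r_def)
    moreover have "f (a + r) = f i"
      using exact_period_eq_iff[OF f] by (simp add: r_def mod_add_right_eq)
    ultimately show "v \<in> set (segment f a N)"
      by (auto simp: set_segment v intro!: image_eqI[of _ _ "a + r"])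
  qed
qed (auto simp: set_segment)

lemma segment_full_period_split:
  assumes f: "exact_period f N" and k: "k \<le> N"
  shows "distinct (segment f a k @ segment f (a + int k) (N - k))"
    "0 < N \<Longrightarrow> set (segment f a k) \<union> set (segment f (a + int k) (N - k)) = range f"
proof -
  have "segment f a k @ segment f (a + int k) (N - k) = segment f a N"
    using k by (simp flip: segment_add)
  then show "distinct (segment f a k @ segment f (a + int k) (N - k))"
    "0 < N \<Longrightarrow> set (segment f a k) \<union> set (segment f (a + int k) (N - k)) = range f"
    using distinct_segment[OF f, of N a] set_segment_full_period[OF f, of a]
    by (simp_all flip: set_append)
qed

definition cycle_seq :: "'a list \<Rightarrow> int \<Rightarrow> 'a" where
  "cycle_seq C i = C ! nat (i mod int (length C))"

lemma exact_period_cycle_seq: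
  assumes "distinct C" "C \<noteq> []"
  shows "exact_period (cycle_seq C) (length C)"
  using assms unfolding exact_period_def cycle_seq_def
  by (auto simp: nth_eq_iff_index_eq nat_less_iff nat_eq_iff2)

lemma range_cycle_seq:
  assumes "C \<noteq> []"
  shows "range (cycle_seq C) = set C"
proof
  show "range (cycle_seq C) \<subseteq> set C"
    using assms by (auto simp: cycle_seq_def nat_less_iff)
  show "set C \<subseteq> range (cycle_seq C)"
  proof
    fix v assume "v \<in> set C"
    then obtain t where "t < length C" "v = C ! t" by (auto simp: in_set_conv_nth)
    then have "v = cycle_seq C (int t)" by (simp add: cycle_seq_def nat_mod_as_int[symmetric])
    then show "v \<in> range (cycle_seq C)" by simp
  qed
qed

lemma cycle_seq_succ:
  assumes "C \<noteq> []"
  shows "cycle_seq C (i + 1) = C ! ((nat (i mod int (length C)) + 1) mod length C)"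
proof -
  let ?L = "int (length C)"
  have "int ((nat (i mod ?L) + 1) mod length C) = (i mod ?L + 1) mod ?L"
    using assms by (simp add: of_nat_mod add.commute)
  also have "\<dots> = (i + 1) mod ?L" by (simp add: mod_add_left_eq)
  finally show ?thesis unfolding cycle_seq_def by (metis nat_int)
qed

lemma cycle_seq_pred:
  assumes "C \<noteq> []"
  shows "cycle_seq C (i - 1) = C ! ((nat (i mod int (length C)) + length C - 1) mod length C)"
proof -
  let ?L = "int (length C)"
  obtain L' where L': "length C = Suc L'" using assms by (cases C) auto
  have "int ((nat (i mod ?L) + length C - 1) mod length C) = (i mod ?L + ?L - 1) mod ?L"
    using assms by (simp add: of_nat_mod L')
  also have "\<dots> = (i mod ?L - 1 + ?L * 1) mod ?L" by (simp add: algebra_simps)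
  also have "\<dots> = (i - 1) mod ?L" by (simp only: mod_mult_self2 mod_diff_left_eq)
  finally show ?thesis unfolding cycle_seq_def by (metis nat_int)
qed

lemma cyc_nbr_cycle_seq:
  assumes C: "C \<noteq> []" and j: "j = i + 1 \<or> j = i - 1"
    and e: "c (cycle_seq C i) (cycle_seq C j) = Some k"
  shows "cyc_nbr c C k (cycle_seq C i) (cycle_seq C j)"
proof -
  define t where "t = nat (i mod int (length C))"
  have "t < length C" using C by (simp add: t_def nat_less_iff)
  moreover have "C ! t = cycle_seq C i" by (simp add: cycle_seq_def t_def)
  ultimately show ?thesis
    unfolding cyc_nbr_def using j e cycle_seq_succ[OF C, of i] cycle_seq_pred[OF C, of i]
    by (auto simp flip: t_def)
qed

lemma cycle_seq_edge_colors:
  assumes cyc: "alt_cycle c C" and ev: "even (length C)"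
  shows "\<exists>p. \<forall>i. c (cycle_seq C i) (cycle_seq C (i + 1)) = Some (alt_color p i)"
proof -
  let ?L = "length C"
  have C: "C \<noteq> []" using cyc by (auto simp: alt_cycle_def)
  define col where "col t = the (c (C ! t) (C ! ((t + 1) mod ?L)))" for t
  have col: "c (C ! t) (C ! ((t + 1) mod ?L)) = Some (col t)" if "t < ?L" for t
    using cyc that by (auto simp: alt_cycle_def col_def)
  have alt: "c (C ! t) (C ! ((t + 1) mod ?L)) \<noteq> c (C ! ((t + 1) mod ?L)) (C ! ((t + 2) mod ?L))"
    if "t < ?L" for t
    using cyc that unfolding alt_cycle_def by blast
  have col_alt: "col t = alt_color (col 0) (int t)" if "t < ?L" for t
    using that
  proof (induction t)
    case (Suc t)
    have "(t + 1) mod ?L = Suc t" "(t + 2) mod ?L = (Suc t + 1) mod ?L"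
      using Suc.prems by simp_all
    then have "col t \<noteq> col (Suc t)"
      using alt[of t] col[of t] col[of "Suc t"] Suc.prems by auto
    then show ?case using Suc by (simp add: color_neq_iff_flip flip_alt_color add.commute)
  qed simp
  have "c (cycle_seq C i) (cycle_seq C (i + 1)) = Some (alt_color (col 0) i)" for i
  proof -
    define t where "t = nat (i mod int ?L)"
    have t: "t < ?L" using C by (simp add: t_def nat_less_iff)
    have "int t = i mod int ?L" using C by (simp add: t_def)
    then have "int t - i = - (int ?L * (i div int ?L))"
      by (simp flip: minus_mult_div_eq_mod)
    then have "alt_color (col 0) (int t) = alt_color (col 0) i"
      using ev by (intro alt_color_cong) simp
    then show ?thesis
      using col[OF t] col_alt[OF t] cycle_seq_succ[OF C, of i]
      by (simp add: cycle_seq_def flip: t_def)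
  qed
  then show ?thesis by blast
qed

section \<open>Two alternating cycles without good pairs\<close>

lemma arith_prog_transition:
  fixes P :: "int \<Rightarrow> bool"
  assumes "P u" "\<not> P (u + D * int s)"
  shows "\<exists>j. P j \<and> \<not> P (j + D)"
  using assms(2)
proof (induction s)
  case (Suc s)
  have step: "u + D * int (Suc s) = (u + D * int s) + D" by (simp add: algebra_simps)
  show ?case
  proof (cases "P (u + D * int s)")
    case True
    then show ?thesis using Suc.prems step by metis
  qed (use Suc.IH in blast)
qed (use assms(1) in simp)

lemma cycle_length_split:
  fixes n m l :: nat
  assumes nm: "2 \<le> n" "2 \<le> m" and l: "even l" "l < 2 * n + 2 * m"
    and range: "(4 \<le> l \<and> l \<le> 4 * min n m) \<or> 2 * max n m \<le> l"
  obtains k1 k2 D u w where "1 \<le> k1" "k1 \<le> 2 * n" "1 \<le> k2" "k2 \<le> 2 * m"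
    "k1 + k2 = l" "4 \<le> l" "D = 2 \<or> D = -2"
    "int k1 - int k2 = D + 2 * int n * u + 2 * int m * w"
proof -
  obtain h where h: "l = 2 * h" using l(1) by blast
  consider "2 * max n m \<le> l" | "4 \<le> l" "l \<le> 4 * min n m" "h + 1 \<le> 2 * n"
    | "4 \<le> l" "l \<le> 4 * min n m" "2 * n < h + 1"
    using range by linarith
  then show thesis
  proof cases
    case 1
    show thesis
      by (rule that[of "h + n - m - 1" "h + m - n + 1" "-2" 1 "-1"])
        (use 1 nm l h in \<open>auto simp: max_def split: if_splits\<close>)
  next
    case 2
    show thesis
      by (rule that[of "h + 1" "h - 1" 2 0 0]) (use 2 nm h in auto)
  next
    case 3
    show thesis
      by (rule that[of "h - 1" "h + 1" "-2" 0 0]) (use 3 nm l h in auto)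
  qed
qed

definition mixed_exterior ::
  "('a \<Rightarrow> 'a \<Rightarrow> color option) \<Rightarrow> (int \<Rightarrow> 'a) \<Rightarrow> (int \<Rightarrow> 'a) \<Rightarrow> color \<Rightarrow> color \<Rightarrow> bool \<Rightarrow> bool"
  where "mixed_exterior c x y p q b \<longleftrightarrow>
    (\<forall>t. \<exists>i j. (alt_color p i = alt_color q j \<longleftrightarrow> b) \<and>
      (c (x i) (y j) = Some (alt_color p i) \<longleftrightarrow> t))"

text \<open>
  The assumption \<open>no_good\<close> is the absence of good pairs: if \<open>{x i, y j}\<close> has colour
  \<open>k = alt_color p i = alt_color q j\<close>, then \<open>x (i + 1)\<close> and \<open>y (j + 1)\<close> are the \<open>k\<close>-neighbours
  of \<open>x i\<close> and \<open>y j\<close> on their cycles.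
\<close>

locale two_alt_cycles =
  fixes c :: "'a \<Rightarrow> 'a \<Rightarrow> color option" and x y :: "int \<Rightarrow> 'a" and n m :: nat
    and p q :: color
  assumes n_ge_2: "2 \<le> n" and m_ge_2: "2 \<le> m"
    and x_period: "exact_period x (2 * n)" and y_period: "exact_period y (2 * m)"
    and sym: "c u v = c v u"
    and x_edge: "c (x i) (x (i + 1)) = Some (alt_color p i)"
    and y_edge: "c (y j) (y (j + 1)) = Some (alt_color q j)"
    and x_neq_y: "x i \<noteq> y j"
    and exterior: "c (x i) (y j) \<noteq> None"
    and no_good: "alt_color p i = alt_color q j \<Longrightarrow> c (x i) (y j) = Some (alt_color p i) \<Longrightarrow>
      c (x (i + 1)) (y (j + 1)) \<noteq> Some (alt_color p i)"
    and mixed: "mixed_exterior c x y p q True"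
begin

definition in_phase :: "int \<Rightarrow> int \<Rightarrow> bool" where
  "in_phase i j \<longleftrightarrow> alt_color p i = alt_color q j"

definition A_pair :: "int \<Rightarrow> int \<Rightarrow> bool" where
  "A_pair i j \<longleftrightarrow> in_phase i j \<and> c (x i) (y j) = Some (alt_color p i)"

definition B_pair :: "int \<Rightarrow> int \<Rightarrow> bool" where
  "B_pair i j \<longleftrightarrow> in_phase i j \<and> c (x i) (y j) = Some (alt_color p (i + 1))"

lemma exterior_color:
  "c (x i) (y j) = Some (alt_color p i) \<or> c (x i) (y j) = Some (alt_color p (i + 1))"
  using exterior[of i j] option_color_flip[of "c (x i) (y j)" "alt_color p i"]
  by (auto simp: flip_alt_color)

lemma B_pair_iff: "B_pair i j \<longleftrightarrow> in_phase i j \<and> \<not> A_pair i j"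
proof -
  have "alt_color p (i + 1) \<noteq> alt_color p i" by (simp flip: flip_alt_color)
  then show ?thesis using exterior_color[of i j] by (auto simp: A_pair_def B_pair_def)
qed

lemma A_pair_exists: "\<exists>i j. A_pair i j"
  using mixed unfolding mixed_exterior_def A_pair_def in_phase_def by blast

lemma B_pair_exists: "\<exists>i j. B_pair i j"
  using mixed unfolding mixed_exterior_def B_pair_iff A_pair_def in_phase_def by blast

lemma in_phase_shift: "even (d - d') \<Longrightarrow> in_phase (i + d) (j + d') \<longleftrightarrow> in_phase i j"
  using alt_color_eq_shift[of p i q j d d'] alt_color_eq_shift[of p "i + d" q "j + d'" "- d" "- d'"]
  by (auto simp: in_phase_def)

lemma A_pair_Suc:
  assumes "A_pair i j"
  shows "A_pair (i + 1) (j + 1)"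
proof -
  have "c (x (i + 1)) (y (j + 1)) \<noteq> Some (alt_color p i)"
    using assms no_good by (auto simp: A_pair_def in_phase_def)
  moreover have "alt_color p (i + 1 + 1) = alt_color p i" by (rule alt_color_cong) simp
  ultimately show ?thesis
    using assms exterior_color[of "i + 1" "j + 1"] in_phase_shift[of 1 1 i j]
    by (auto simp: A_pair_def)
qed

lemma A_pair_periodic: "A_pair (i + 2 * int n * k) (j + 2 * int m * k') \<longleftrightarrow> A_pair i j"
proof -
  have "x (i + 2 * int n * k) = x i" "y (j + 2 * int m * k') = y j"
    using exact_period_periodic[OF x_period, of i k] exact_period_periodic[OF y_period, of j k']
    by simp_all
  moreover have "alt_color p (i + 2 * int n * k) = alt_color p i" by (rule alt_color_cong) simp
  moreover have "in_phase (i + 2 * int n * k) (j + 2 * int m * k') \<longleftrightarrow> in_phase i j"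
    by (rule in_phase_shift) simp
  ultimately show ?thesis by (simp add: A_pair_def)
qed

lemma A_pair_shift_nat: "A_pair i j \<Longrightarrow> A_pair (i + int t) (j + int t)"
proof (induction t)
  case (Suc t)
  then have "A_pair (i + int t + 1) (j + int t + 1)" by (intro A_pair_Suc)
  then show ?case by (simp add: ac_simps)
qed simp

text \<open>Backward shifts are forward shifts modulo the common period \<open>2n \<cdot> 2m\<close>.\<close>

lemma A_pair_shift_imp:
  assumes "A_pair i j"
  shows "A_pair (i + t) (j + t)"
proof -
  define N where "N = 2 * int n * (2 * int m)"
  have "N > 0" using n_ge_2 m_ge_2 by (simp add: N_def)
  then obtain r k where t: "t = r + N * k" and "0 \<le> r"
    by (metis mod_mult_div_eq pos_mod_sign)
  then have "A_pair (i + r) (j + r)"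
    using A_pair_shift_nat[OF assms, of "nat r"] by simp
  then have "A_pair (i + r + 2 * int n * (2 * int m * k)) (j + r + 2 * int m * (2 * int n * k))"
    by (simp only: A_pair_periodic)
  then show ?thesis by (simp add: t N_def ac_simps)
qed

lemma A_pair_shift: "A_pair (i + t) (j + t) \<longleftrightarrow> A_pair i j"
  using A_pair_shift_imp[of i j t] A_pair_shift_imp[of "i + t" "j + t" "- t"] by auto

lemma B_pair_shift: "B_pair (i + t) (j + t) \<longleftrightarrow> B_pair i j"
  by (simp add: B_pair_iff A_pair_shift in_phase_shift)

lemma A_pair_lattice: "A_pair i (j + 2 * int n * k + 2 * int m * k') \<longleftrightarrow> A_pair i j"
proof -
  have "A_pair i (j + 2 * int n * k + 2 * int m * k') \<longleftrightarrow>
        A_pair (i - 2 * int n * k + 2 * int n * k) (j + 2 * int m * k' + 2 * int n * k)"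
    by (simp add: algebra_simps)
  also have "\<dots> \<longleftrightarrow> A_pair (i - 2 * int n * k + 2 * int n * 0) (j + 2 * int m * k')"
    by (simp only: A_pair_shift) simp
  also have "\<dots> \<longleftrightarrow> A_pair i j"
    using A_pair_periodic[of i "- k" j k'] by (simp add: algebra_simps)
  finally show ?thesis .
qed

lemma B_pair_lattice: "B_pair i (j + 2 * int n * k + 2 * int m * k') \<longleftrightarrow> B_pair i j"
  using A_pair_lattice in_phase_shift[of 0 "2 * int n * k + 2 * int m * k'" i j]
  by (simp add: B_pair_iff add.assoc)

lemma A_B_transition:
  assumes D: "D = 2 \<or> D = -2"
  shows "\<exists>j. A_pair a j \<and> B_pair a (j + D)"
proof -
  obtain i0 j0 where "A_pair i0 j0" using A_pair_exists by blast
  define u where "u = j0 + (a - i0)"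
  have u: "A_pair a u"
    using A_pair_shift[of i0 "a - i0" j0] \<open>A_pair i0 j0\<close> by (simp add: u_def)
  obtain i1 j1 where "B_pair i1 j1" using B_pair_exists by blast
  define w where "w = j1 + (a - i1)"
  have w: "B_pair a w"
    using B_pair_shift[of i1 "a - i1" j1] \<open>B_pair i1 j1\<close> by (simp add: w_def)
  have "alt_color q u = alt_color q w"
    using u w by (simp add: B_pair_iff A_pair_def in_phase_def)
  then have "even (w - u)" by (simp add: alt_color_eq_iff)
  then have "D dvd (w - u)" using D by auto
  then obtain k where k: "w - u = D * k" by blast
  obtain h where h: "D = 2 * h" using D by auto
  define s where "s = nat (k mod int m)"
  have s_eq: "int s = k - int m * (k div int m)"
    using m_ge_2 by (simp add: s_def minus_mult_div_eq_mod)
  have "u + D * int s = (u + D * k) + 2 * int n * 0 + 2 * int m * (- h * (k div int m))"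
    unfolding s_eq h by (simp add: algebra_simps)
  also have "u + D * k = w" using k by simp
  finally have "\<not> A_pair a (u + D * int s)"
    using w B_pair_lattice[of a w 0 "- h * (k div int m)"] by (simp add: B_pair_iff)
  then obtain j where "A_pair a j" "\<not> A_pair a (j + D)"
    using arith_prog_transition[of "A_pair a" u D s] u by blast
  moreover have "in_phase a (j + D)"
    using \<open>A_pair a j\<close> in_phase_shift[of 0 D a j] h by (auto simp: A_pair_def)
  ultimately show ?thesis by (auto simp: B_pair_iff)
qed

lemma alt_path_x_segment: "alt_path c (alt_color p a) (segment x a k)"
  by (rule alt_path_segment[where f = x, OF x_edge])

lemma alt_path_rev_y_segment: "alt_path c (alt_color q (b + int k)) (rev (segment y b k))"
  using alt_path_rev[OF sym alt_path_segment[where f = y, OF y_edge, of b k]]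
  by (simp add: alt_color_add)

lemma x_y_disjoint: "range x \<inter> range y = {}"
  using x_neq_y by auto

lemma B_pair_color: "B_pair i j \<Longrightarrow> c (y j) (x i) = Some (alt_color p (i + 1))"
  by (simp add: B_pair_def sym[of "y j"])

definition xy_block :: "int \<Rightarrow> nat \<Rightarrow> int \<Rightarrow> nat \<Rightarrow> 'a list" where
  "xy_block a k b l = segment x a k @ rev (segment y b l)"

lemma xy_block_simps:
  assumes "0 < k" "0 < l"
  shows "length (xy_block a k b l) = k + l" "hd (xy_block a k b l) = x a"
    "last (xy_block a k b l) = y b" "xy_block a k b l \<noteq> []"
  using assms by (simp_all add: xy_block_def hd_segment last_rev)

lemma alt_path_xy_block:
  assumes "0 < k" "0 < l" and A: "A_pair (a + int k - 1) (b + int l - 1)"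
  shows "alt_path c (alt_color p a) (xy_block a k b l)"
  unfolding xy_block_def
proof (rule alt_path_append)
  let ?X = "segment x a k" and ?Y = "rev (segment y b l)"
  have "alt_color p (a + int k - 1) = alt_color q (b + int l - 1)"
    using A by (simp add: A_pair_def in_phase_def)
  then have "alt_color q (b + int l) = alt_color (alt_color p a) (int (length ?X))"
    using alt_color_eq_shift[of p "a + int k - 1" q "b + int l - 1" 1 1]
    by (simp add: alt_color_add)
  then show "alt_path c (alt_color (alt_color p a) (int (length ?X))) ?Y"
    using alt_path_rev_y_segment[of b l] by simp
  show "c (last ?X) (hd ?Y) = Some (alt_color (alt_color p a) (int (length ?X) - 1))"
    using A assms by (simp add: A_pair_def last_segment hd_rev alt_color_add algebra_simps)
qed (use alt_path_x_segment assms in auto)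

lemma two_segment_cycle:
  assumes k1: "1 \<le> k1" "k1 \<le> 2 * n" and k2: "1 \<le> k2" "k2 \<le> 2 * m"
    and ev: "even (k1 + k2)" and four: "4 \<le> k1 + k2"
    and A: "A_pair a j" and B: "B_pair a (j + int k1 - int k2)"
  shows "alt_cycle c (xy_block a k1 (j + int k1 - int k2) k2)"
proof -
  let ?xs = "xy_block a k1 (j + int k1 - int k2) k2"
  have "A_pair (a + (int k1 - 1)) (j + (int k1 - 1))"
    using A A_pair_shift by blast
  then have "alt_path c (alt_color p a) ?xs"
    using k1 k2 by (intro alt_path_xy_block) (simp_all add: algebra_simps)
  moreover have "alt_color p (a + 1) = alt_color p (a + (int k1 + int k2 - 1))"
    by (rule alt_color_cong) (use ev in simp)
  then have "c (last ?xs) (hd ?xs) = Some (alt_color (alt_color p a) (int (length ?xs) - 1))"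
    using B_pair_color[OF B] k1 k2 by (simp add: xy_block_simps alt_color_add)
  moreover have "distinct ?xs"
    using distinct_segment[OF x_period k1(2)] distinct_segment[OF y_period k2(2)] x_y_disjoint
      set_segment_subset[of x a k1] set_segment_subset[of y "j + int k1 - int k2" k2]
    by (auto simp: xy_block_def)
  ultimately show ?thesis
    using k1 k2 ev four by (intro alt_cycle_of_path) (simp_all add: xy_block_simps)
qed

text \<open>
  A single \<open>xy_block\<close> through all vertices would need an A-pair and a B-pair at the same
  position, so the Hamiltonian cycle is made of two blocks:
  \<open>x a, \<dots>, x (a + k - 1), y b, y (b - 1), x (a + k), \<dots>, x (a + 2n - 1),
  y (b - 2), \<dots>, y (b - 2m + 1)\<close>.
\<close>

definition hamiltonian_walk :: "int \<Rightarrow> nat \<Rightarrow> int \<Rightarrow> 'a list" where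
  "hamiltonian_walk a k b =
     xy_block a k (b - 1) 2 @ xy_block (a + int k) (2 * n - k) (b - 2 * int m + 1) (2 * m - 2)"

lemma length_hamiltonian_walk:
  "k \<le> 2 * n \<Longrightarrow> length (hamiltonian_walk a k b) = 2 * n + 2 * m"
  using m_ge_2 by (simp add: hamiltonian_walk_def xy_block_def)

lemma distinct_hamiltonian_walk:
  assumes "k \<le> 2 * n"
  shows "distinct (hamiltonian_walk a k b)" "set (hamiltonian_walk a k b) = range x \<union> range y"
proof -
  have "b - 2 * int m + 1 + int (2 * m - 2) = b - 1" "2 * m - (2 * m - 2) = 2"
    using m_ge_2 by auto
  then have "distinct (segment y (b - 2 * int m + 1) (2 * m - 2) @ segment y (b - 1) 2)"
      "set (segment y (b - 2 * int m + 1) (2 * m - 2)) \<union> set (segment y (b - 1) 2) = range y"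
    using segment_full_period_split[OF y_period, of "2 * m - 2" "b - 2 * int m + 1"] m_ge_2
    by auto
  moreover have "distinct (segment x a k @ segment x (a + int k) (2 * n - k))"
      "set (segment x a k) \<union> set (segment x (a + int k) (2 * n - k)) = range x"
    using segment_full_period_split[OF x_period assms] n_ge_2 by auto
  ultimately show "distinct (hamiltonian_walk a k b)"
    "set (hamiltonian_walk a k b) = range x \<union> range y"
    using x_y_disjoint by (auto simp: hamiltonian_walk_def xy_block_def)
qed

lemma alt_path_hamiltonian_walk:
  assumes k: "1 \<le> k" "k + 2 \<le> 2 * n"
    and A1: "A_pair (a + int k - 1) b" and B1: "B_pair (a + int k) (b - 1)"
    and A2: "A_pair (a - 1) (b - 2)"
  shows "alt_path c (alt_color p a) (hamiltonian_walk a k b)"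
  unfolding hamiltonian_walk_def
proof (rule alt_path_append)
  let ?X = "xy_block a k (b - 1) 2"
    and ?Y = "xy_block (a + int k) (2 * n - k) (b - 2 * int m + 1) (2 * m - 2)"
  have int_diff: "int (2 * n - k) = 2 * int n - int k" "int (2 * m - 2) = 2 * int m - 2"
    using k m_ge_2 by auto
  show "alt_path c (alt_color p a) ?X"
    using k A1 by (intro alt_path_xy_block) simp_all
  have "A_pair (a - 1 + 2 * int n * 1) (b - 2 + 2 * int m * 0)"
    using A2 by (simp only: A_pair_periodic)
  then have "alt_path c (alt_color p (a + int k)) ?Y"
    using k m_ge_2 by (intro alt_path_xy_block) (simp_all add: int_diff algebra_simps)
  moreover have "alt_color p (a + int k) = alt_color (alt_color p a) (int (length ?X))"
    unfolding alt_color_add using k by (simp add: xy_block_simps) (rule alt_color_cong, simp)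
  ultimately show "alt_path c (alt_color (alt_color p a) (int (length ?X))) ?Y"
    by simp
  show "c (last ?X) (hd ?Y) = Some (alt_color (alt_color p a) (int (length ?X) - 1))"
    using B_pair_color[OF B1] k m_ge_2 by (simp add: xy_block_simps alt_color_add algebra_simps)
qed (use k in \<open>simp add: xy_block_simps\<close>)

lemma hamiltonian_cycle:
  assumes k: "1 \<le> k" "k + 2 \<le> 2 * n" "even k"
    and A1: "A_pair (a + int k - 1) b" and B1: "B_pair (a + int k) (b - 1)"
    and A2: "A_pair (a - 1) (b - 2)" and B2: "B_pair a (b + 1)"
  shows "alt_cycle c (hamiltonian_walk a k b)"
proof (rule alt_cycle_of_path)
  show "alt_path c (alt_color p a) (hamiltonian_walk a k b)"
    using alt_path_hamiltonian_walk k A1 B1 A2 by blast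
  have "y (b - 2 * int m + 1) = y (b + 1)"
    using exact_period_periodic[OF y_period, of "b + 1" "-1"] by (simp add: algebra_simps)
  moreover have "alt_color p (a + 1) = alt_color p (a + (2 * int n + 2 * int m - 1))"
    by (rule alt_color_cong) simp
  ultimately show "c (last (hamiltonian_walk a k b)) (hd (hamiltonian_walk a k b)) =
      Some (alt_color (alt_color p a) (int (length (hamiltonian_walk a k b)) - 1))"
    using B_pair_color[OF B2] k m_ge_2
    by (simp add: hamiltonian_walk_def xy_block_simps length_hamiltonian_walk alt_color_add)
qed (use k m_ge_2 distinct_hamiltonian_walk length_hamiltonian_walk in auto)

lemma two_segment_cycle_through:
  assumes k1: "1 \<le> k1" "k1 \<le> 2 * n" and k2: "1 \<le> k2" "k2 \<le> 2 * m"
    and ev: "even (k1 + k2)" and four: "4 \<le> k1 + k2"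
    and D: "D = 2 \<or> D = -2" and lattice: "int k1 - int k2 = D + 2 * int n * u + 2 * int m * w"
    and v: "v \<in> range x \<union> range y"
  shows "\<exists>xs. alt_cycle c xs \<and> length xs = k1 + k2 \<and> v \<in> set xs"
proof -
  obtain j where A: "A_pair 0 j" and "B_pair 0 (j + D)"
    using A_B_transition[OF D] by blast
  then have B: "B_pair 0 (j + int k1 - int k2)"
    using B_pair_lattice[of 0 "j + D" u w] lattice by (simp add: algebra_simps)
  have cycle: "alt_cycle c (xy_block t k1 (j + t + int k1 - int k2) k2) \<and>
      x t \<in> set (xy_block t k1 (j + t + int k1 - int k2) k2) \<and>
      y (j + t + int k1 - int k2) \<in> set (xy_block t k1 (j + t + int k1 - int k2) k2)" for t
  proof -
    have "A_pair t (j + t)" "B_pair t (j + t + int k1 - int k2)"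
      using A_pair_shift[of 0 t j] B_pair_shift[of 0 t "j + int k1 - int k2"] A B
      by (simp_all add: algebra_simps)
    then show ?thesis
      using two_segment_cycle[OF k1 k2 ev four] k1 k2
        hd_in_set[of "xy_block t k1 (j + t + int k1 - int k2) k2"]
        last_in_set[of "xy_block t k1 (j + t + int k1 - int k2) k2"]
      by (simp add: xy_block_simps)
  qed
  from v consider a where "v = x a" | b where "v = y b" by blast
  then show ?thesis
  proof cases
    case (1 a)
    then show ?thesis using cycle[of a] k1 k2 by (auto simp: xy_block_simps)
  next
    case (2 b)
    then show ?thesis
      using cycle[of "b - j - int k1 + int k2"] k1 k2 by (auto simp: xy_block_simps)
  qed
qed

lemma opposite_transitions:
  obtains j k where "1 \<le> k" "k + 2 \<le> 2 * n" "even k"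
    "A_pair 0 j" "B_pair 0 (j - 2)" "A_pair 0 (j + int k - 2)" "B_pair 0 (j + int k)"
proof -
  obtain j where A1: "A_pair 0 j" and B1: "B_pair 0 (j + -2)"
    using A_B_transition by blast
  obtain j' where "A_pair 0 j'" "B_pair 0 (j' + 2)"
    using A_B_transition by blast
  define r where "r = (j' - j) mod (2 * int n)"
  define t where "t = (j' - j) div (2 * int n)"
  have "r + 2 * int n * t = j' - j"
    unfolding r_def t_def by (rule mod_mult_div_eq)
  then have j': "j' = j + r + 2 * int n * t" by simp
  have A2: "A_pair 0 (j + r)" and B2: "B_pair 0 (j + r + 2)"
    using \<open>A_pair 0 j'\<close> \<open>B_pair 0 (j' + 2)\<close> A_pair_lattice[of 0 "j + r" t 0]
      B_pair_lattice[of 0 "j + r + 2" t 0]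
    by (simp_all add: j' algebra_simps)
  have r: "0 \<le> r" "r < 2 * int n" using n_ge_2 by (simp_all add: r_def)
  have "alt_color q j = alt_color q j'"
    using A1 \<open>A_pair 0 j'\<close> unfolding A_pair_def in_phase_def by metis
  then have "even (j' - j)" by (simp add: alt_color_eq_iff)
  then have "even r" by (simp add: r_def even_iff_mod_2_eq_zero mod_mod_cancel)
  moreover have "r \<noteq> 2 * int n - 2"
  proof
    assume "r = 2 * int n - 2"
    then have "B_pair 0 (j + 2 * int n * 1 + 2 * int m * 0)"
      using B2 by (simp add: algebra_simps)
    then have "B_pair 0 j" by (simp only: B_pair_lattice)
    then show False using A1 by (simp add: B_pair_iff)
  qed
  ultimately have "r + 4 \<le> 2 * int n" using r by presburger
  define k where "k = nat (r + 2)"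
  have k: "1 \<le> k" "k + 2 \<le> 2 * n" "even k" and "int k = r + 2"
    using r \<open>r + 4 \<le> _\<close> \<open>even r\<close> by (simp_all add: k_def even_nat_iff)
  then show thesis
    using that[OF k, of j] A1 B1 A2 B2 by (simp add: algebra_simps)
qed

lemma hamiltonian_cycle_exists:
  "\<exists>xs. alt_cycle c xs \<and> length xs = 2 * n + 2 * m \<and> set xs = range x \<union> range y"
proof -
  obtain j k where k: "1 \<le> k" "k + 2 \<le> 2 * n" "even k"
    and A1: "A_pair 0 j" and B1: "B_pair 0 (j - 2)"
    and A2: "A_pair 0 (j + int k - 2)" and B2: "B_pair 0 (j + int k)"
    using opposite_transitions by blast
  have "alt_cycle c (hamiltonian_walk 0 k (j + int k - 1))"
  proof (rule hamiltonian_cycle[OF k])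
    show "A_pair (0 + int k - 1) (j + int k - 1)"
      using A_pair_shift[of 0 "int k - 1" j] A1 by (simp add: algebra_simps)
    show "B_pair (0 + int k) (j + int k - 1 - 1)"
      using B_pair_shift[of 0 "int k" "j - 2"] B1 by (simp add: algebra_simps)
    show "A_pair (0 - 1) (j + int k - 1 - 2)"
      using A_pair_shift[of 0 "-1" "j + int k - 2"] A2 by (simp add: algebra_simps)
    show "B_pair 0 (j + int k - 1 + 1)"
      using B2 by simp
  qed
  then show ?thesis
    using length_hamiltonian_walk distinct_hamiltonian_walk k by auto
qed

theorem alt_cycle_through_vertex:
  assumes v: "v \<in> range x \<union> range y" and l: "even l"
    "(4 \<le> l \<and> l \<le> 4 * min n m) \<or> (2 * max n m \<le> l \<and> l \<le> 2 * n + 2 * m)"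
  shows "\<exists>xs. alt_cycle c xs \<and> length xs = l \<and> v \<in> set xs"
proof (cases "l = 2 * n + 2 * m")
  case True
  then show ?thesis using hamiltonian_cycle_exists v by auto
next
  case False
  then have "l < 2 * n + 2 * m" using l(2) by auto
  then obtain k1 k2 D u w where "1 \<le> k1" "k1 \<le> 2 * n" "1 \<le> k2" "k2 \<le> 2 * m"
      "k1 + k2 = l" "4 \<le> l" "D = 2 \<or> D = -2"
      "int k1 - int k2 = D + 2 * int n * u + 2 * int m * w"
    using cycle_length_split[OF n_ge_2 m_ge_2 l(1)] l(2) by blast
  then show ?thesis
    using two_segment_cycle_through[of k1 k2 D u w v] v l(1) by auto
qed

end

section \<open>Colored sums\<close>

lemma color_determined_by_phase:
  fixes col :: "int \<Rightarrow> int \<Rightarrow> color" and t :: "bool \<Rightarrow> bool"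
  assumes t: "\<And>i j. col i j = alt_color p i \<longleftrightarrow> t (alt_color p i = alt_color q j)"
  shows "(\<exists>f. \<forall>i j. col i j = f i) \<or> (\<exists>g. \<forall>i j. col i j = g j)"
proof -
  have other: "col i j \<noteq> alt_color p i \<Longrightarrow> col i j = flip (alt_color p i)"
    "alt_color p i \<noteq> alt_color q j \<Longrightarrow> alt_color q j = flip (alt_color p i)" for i j
    by (simp_all add: color_neq_iff_flip)
  consider "t True = t False" | "t True" "\<not> t False" | "\<not> t True" "t False" by blast
  then show ?thesis
  proof cases
    case 1
    then have "col i j = (if t True then alt_color p i else flip (alt_color p i))" for i j
      using t[of i j] other(1)[of i j] by (cases "alt_color p i = alt_color q j") auto
    then show ?thesis
      by (intro disjI1 exI[of _ "\<lambda>i. if t True then alt_color p i else flip (alt_color p i)"])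
        blast
  next
    case 2
    then have "col i j = alt_color q j" for i j
      using t[of i j] other[of i j] by (cases "alt_color p i = alt_color q j") auto
    then show ?thesis by (intro disjI2 exI[of _ "alt_color q"]) blast
  next
    case 3
    then have "col i j = flip (alt_color q j)" for i j
      using t[of i j] other[of i j] by (cases "alt_color p i = alt_color q j") auto
    then show ?thesis by (intro disjI2 exI[of _ "\<lambda>j. flip (alt_color q j)"]) blast
  qed
qed

lemma mixed_exterior_reflect:
  assumes "mixed_exterior c x y p q False"
  shows "mixed_exterior c x (\<lambda>j. y (- j)) p (flip q) True"
  unfolding mixed_exterior_def
proof
  fix t
  obtain i j where "alt_color p i \<noteq> alt_color q j" "c (x i) (y j) = Some (alt_color p i) \<longleftrightarrow> t"
    using assms unfolding mixed_exterior_def by blast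
  then show "\<exists>i j. (alt_color p i = alt_color (flip q) j \<longleftrightarrow> True) \<and>
      (c (x i) (y (- j)) = Some (alt_color p i) \<longleftrightarrow> t)"
    by (intro exI[of _ i] exI[of _ "- j"]) (simp add: alt_color_flip alt_color_eq_iff)
qed

locale colored_sum =
  fixes c :: "'a \<Rightarrow> 'a \<Rightarrow> color option" and C1 C2 :: "'a list" and n m :: nat
  assumes sym: "c u v = c v u"
    and cycle1: "alt_cycle c C1" "length C1 = 2 * n"
    and cycle2: "alt_cycle c C2" "length C2 = 2 * m"
    and disjoint: "set C1 \<inter> set C2 = {}"
    and exterior: "u \<in> set C1 \<Longrightarrow> w \<in> set C2 \<Longrightarrow> c u w \<noteq> None"
    and no_good: "no_good_pair c C1 C2"
    and non_singular1: "\<exists>v \<in> set C1. non_singular c v (set C2)"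
    and non_singular2: "\<exists>w \<in> set C2. non_singular c w (set C1)"
begin

lemma n_ge_2: "2 \<le> n" and m_ge_2: "2 \<le> m"
  using cycle1 cycle2 by (auto simp: alt_cycle_def)

lemma C1_ne: "C1 \<noteq> []" and C2_ne: "C2 \<noteq> []"
  using n_ge_2 m_ge_2 cycle1(2) cycle2(2) by auto

lemma range_C1: "range (cycle_seq C1) = set C1" and range_C2: "range (cycle_seq C2) = set C2"
  using range_cycle_seq[OF C1_ne] range_cycle_seq[OF C2_ne] .

lemma cycle_seq_exterior: "c (cycle_seq C1 i) (cycle_seq C2 j) \<noteq> None"
proof -
  have "cycle_seq C1 i \<in> set C1" "cycle_seq C2 j \<in> set C2"
    using range_C1 range_C2 by (metis rangeI)+
  then show ?thesis using exterior by auto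
qed

lemma non_singular_cycle_seq1:
  "\<exists>i j j'. c (cycle_seq C1 i) (cycle_seq C2 j) \<noteq> c (cycle_seq C1 i) (cycle_seq C2 j')"
proof -
  obtain v w w' where "v \<in> set C1" "w \<in> set C2" "w' \<in> set C2"
    and "c v w = Some Red" "c v w' = Some Blue"
    using non_singular1 by (auto simp: non_singular_def)
  moreover obtain i j j' where "v = cycle_seq C1 i" "w = cycle_seq C2 j" "w' = cycle_seq C2 j'"
    using calculation(1-3) range_C1 range_C2 by (metis rangeE)
  ultimately show ?thesis by (metis color.distinct(1) option.inject)
qed

lemma non_singular_cycle_seq2:
  "\<exists>j i i'. c (cycle_seq C1 i) (cycle_seq C2 j) \<noteq> c (cycle_seq C1 i') (cycle_seq C2 j)"
proof -
  obtain w v v' where "w \<in> set C2" "v \<in> set C1" "v' \<in> set C1"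
    and "c w v = Some Red" "c w v' = Some Blue"
    using non_singular2 by (auto simp: non_singular_def)
  moreover obtain j i i' where "w = cycle_seq C2 j" "v = cycle_seq C1 i" "v' = cycle_seq C1 i'"
    using calculation(1-3) range_C1 range_C2 by (metis rangeE)
  ultimately show ?thesis by (metis sym color.distinct(1) option.inject)
qed

text \<open>
  Otherwise the colour of \<open>{cycle_seq C1 i, cycle_seq C2 j}\<close> would depend on \<open>i\<close> alone or
  on \<open>j\<close> alone, and every vertex of \<open>C1\<close>, respectively \<open>C2\<close>, would be singular.
\<close>

lemma mixed_exterior_cycle_seq:
  "mixed_exterior c (cycle_seq C1) (cycle_seq C2) p q True \<or>
   mixed_exterior c (cycle_seq C1) (cycle_seq C2) p q False"
proof (rule ccontr)
  assume not_mixed: "\<not> ?thesis"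
  define col where "col i j = the (c (cycle_seq C1 i) (cycle_seq C2 j))" for i j
  have c_col: "c (cycle_seq C1 i) (cycle_seq C2 j) = Some (col i j)" for i j
    using cycle_seq_exterior[of i j] by (auto simp: col_def)
  define ph where "ph i j \<longleftrightarrow> alt_color p i = alt_color q j" for i j
  define T where "T i j \<longleftrightarrow> col i j = alt_color p i" for i j
  define t where "t b \<longleftrightarrow> (\<exists>i j. (ph i j \<longleftrightarrow> b) \<and> T i j)" for b
  have uniform: "\<exists>t0. \<forall>i j. (ph i j \<longleftrightarrow> b) \<longrightarrow> (T i j \<longleftrightarrow> t0)" for b
  proof -
    have "\<not> mixed_exterior c (cycle_seq C1) (cycle_seq C2) p q b"
      using not_mixed by (cases b) simp_all
    then obtain t1 where "\<forall>i j. (ph i j \<longleftrightarrow> b) \<longrightarrow> \<not> (T i j \<longleftrightarrow> t1)"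
      unfolding mixed_exterior_def c_col option.inject ph_def T_def by blast
    then show ?thesis by (intro exI[of _ "\<not> t1"]) blast
  qed
  have "T i j \<longleftrightarrow> t (ph i j)" for i j
  proof -
    obtain t0 where "\<forall>i' j'. (ph i' j' \<longleftrightarrow> ph i j) \<longrightarrow> (T i' j' \<longleftrightarrow> t0)"
      using uniform[of "ph i j"] by blast
    then show ?thesis unfolding t_def by blast
  qed
  then consider f where "\<And>i j. col i j = f i" | g where "\<And>i j. col i j = g j"
    using color_determined_by_phase[of col p t q] unfolding T_def ph_def by blast
  then show False
  proof cases
    case (1 f)
    then show False using non_singular_cycle_seq1 by (simp add: c_col)
  next
    case (2 g)
    then show False using non_singular_cycle_seq2 by (simp add: c_col)
  qed
qed

lemma two_alt_cycles_oriented: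
  assumes s: "s = 1 \<or> s = -1"
    and x_edge: "\<And>i. c (cycle_seq C1 i) (cycle_seq C1 (i + 1)) = Some (alt_color p i)"
    and y_edge: "\<And>j. c (cycle_seq C2 (s * j)) (cycle_seq C2 (s * j + s)) = Some (alt_color q j)"
    and mixed: "mixed_exterior c (cycle_seq C1) (\<lambda>j. cycle_seq C2 (s * j)) p q True"
  shows "two_alt_cycles c (cycle_seq C1) (\<lambda>j. cycle_seq C2 (s * j)) n m p q"
proof
  show "exact_period (cycle_seq C1) (2 * n)"
    using exact_period_cycle_seq[OF _ C1_ne] cycle1 by (simp add: alt_cycle_def)
  have "exact_period (cycle_seq C2) (2 * m)"
    using exact_period_cycle_seq[OF _ C2_ne] cycle2 by (simp add: alt_cycle_def)
  then show "exact_period (\<lambda>j. cycle_seq C2 (s * j)) (2 * m)"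
    using s exact_period_reflect[of "cycle_seq C2"] by auto
  show "c (cycle_seq C2 (s * j)) (cycle_seq C2 (s * (j + 1))) = Some (alt_color q j)" for j
    using y_edge by (simp add: algebra_simps)
  show "cycle_seq C1 i \<noteq> cycle_seq C2 (s * j)" for i j
    using disjoint range_C1 range_C2 by (metis disjoint_iff rangeI)
  show "c (cycle_seq C1 i) (cycle_seq C2 (s * j)) \<noteq> None" for i j
    using cycle_seq_exterior by simp
  show "c (cycle_seq C1 (i + 1)) (cycle_seq C2 (s * (j + 1))) \<noteq> Some (alt_color p i)"
    if "alt_color p i = alt_color q j"
      and "c (cycle_seq C1 i) (cycle_seq C2 (s * j)) = Some (alt_color p i)" for i j
  proof -
    have "cyc_nbr c C1 (alt_color p i) (cycle_seq C1 i) (cycle_seq C1 (i + 1))"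
      using x_edge by (intro cyc_nbr_cycle_seq[OF C1_ne]) auto
    moreover have "cyc_nbr c C2 (alt_color p i) (cycle_seq C2 (s * j)) (cycle_seq C2 (s * j + s))"
      using y_edge s that(1) by (intro cyc_nbr_cycle_seq[OF C2_ne]) auto
    moreover have "cycle_seq C1 i \<in> set C1" "cycle_seq C2 (s * j) \<in> set C2"
      using range_C1 range_C2 by (metis rangeI)+
    ultimately show ?thesis
      using no_good that(2) by (simp add: no_good_pair_def algebra_simps)
  qed
qed (use n_ge_2 m_ge_2 sym x_edge mixed in auto)

text \<open>
  If the in-phase exterior edges are not mixed, the out-of-phase ones are, and traversing
  \<open>C2\<close> backwards puts those in phase.
\<close>

lemma two_alt_cycles_exist:
  "\<exists>x y p q. two_alt_cycles c x y n m p q \<and> range x \<union> range y = set C1 \<union> set C2"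
proof -
  have even: "even (length C1)" "even (length C2)" using cycle1(2) cycle2(2) by simp_all
  obtain p where x_edge: "\<And>i. c (cycle_seq C1 i) (cycle_seq C1 (i + 1)) = Some (alt_color p i)"
    using cycle_seq_edge_colors[OF cycle1(1) even(1)] by blast
  obtain q where y_edge: "\<And>j. c (cycle_seq C2 j) (cycle_seq C2 (j + 1)) = Some (alt_color q j)"
    using cycle_seq_edge_colors[OF cycle2(1) even(2)] by blast
  from mixed_exterior_cycle_seq[of p q] show ?thesis
  proof
    assume "mixed_exterior c (cycle_seq C1) (cycle_seq C2) p q True"
    then have "two_alt_cycles c (cycle_seq C1) (\<lambda>j. cycle_seq C2 (1 * j)) n m p q"
      using y_edge by (intro two_alt_cycles_oriented[OF _ x_edge]) simp_all
    then show ?thesis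
      using range_C1 range_C2
      by (intro exI[of _ "cycle_seq C1"] exI[of _ "cycle_seq C2"] exI[of _ p] exI[of _ q]) simp
  next
    assume "mixed_exterior c (cycle_seq C1) (cycle_seq C2) p q False"
    then have "mixed_exterior c (cycle_seq C1) (\<lambda>j. cycle_seq C2 (- 1 * j)) p (flip q) True"
      using mixed_exterior_reflect by simp
    moreover have "c (cycle_seq C2 (- 1 * j)) (cycle_seq C2 (- 1 * j + - 1)) =
        Some (alt_color (flip q) j)" for j
      using y_edge[of "- j - 1"] sym by (simp add: alt_color_flip alt_color_eq_iff)
    ultimately have "two_alt_cycles c (cycle_seq C1) (\<lambda>j. cycle_seq C2 (- 1 * j)) n m p (flip q)"
      by (intro two_alt_cycles_oriented[OF _ x_edge]) simp_all
    moreover have "range (\<lambda>j. cycle_seq C2 (- 1 * j)) = range (cycle_seq C2)"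
      by (metis (no_types) surj_def mult_minus1 minus_minus fun.set_map image_image
          range_composition)
    ultimately show ?thesis
      using range_C1 range_C2
      by (intro exI[of _ "cycle_seq C1"] exI[of _ "\<lambda>j. cycle_seq C2 (- 1 * j)"] exI[of _ p]
          exI[of _ "flip q"]) simp
  qed
qed

end

theorem proposition3p11:
  fixes V1 V2 V :: "'a set" and c1 c2 c :: "'a \<Rightarrow> 'a \<Rightarrow> color option"
    and C1 C2 :: "'a list" and n m :: nat
  assumes G1: "colgraph V1 c1" and G2: "colgraph V2 c2" and disj: "V1 \<inter> V2 = {}"
    and C1: "alt_cycle c1 C1" "set C1 = V1" "length C1 = 2 * n"
    and C2: "alt_cycle c2 C2" "set C2 = V2" "length C2 = 2 * m"
    and G: "in_colored_sum V c V1 c1 V2 c2"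
    and nogood: "no_good_pair c C1 C2"
    and ns1: "\<exists>v \<in> V1. non_singular c v V2"
    and ns2: "\<exists>w \<in> V2. non_singular c w V1"
  shows "\<forall>v \<in> V. \<forall>l. even l \<and>
           ((4 \<le> l \<and> l \<le> 4 * min n m) \<or> (2 * max n m \<le> l \<and> l \<le> 2 * n + 2 * m)) \<longrightarrow>
           (\<exists>xs. alt_cycle c xs \<and> length xs = l \<and> v \<in> set xs)"
proof -
  have "colored_sum c C1 C2 n m"
  proof
    show "c u v = c v u" for u v
      using G by (simp add: in_colored_sum_def colgraph_def)
    show "alt_cycle c C1" "alt_cycle c C2"
      using alt_cycle_cong[OF _ C1(1)] alt_cycle_cong[OF _ C2(1)] G C1(2) C2(2)
      by (simp_all add: in_colored_sum_def)
  qed (use C1 C2 G disj nogood ns1 ns2 in \<open>auto simp: in_colored_sum_def\<close>)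
  then obtain x y p q where cyc: "two_alt_cycles c x y n m p q"
    and "range x \<union> range y = set C1 \<union> set C2"
    by (blast dest: colored_sum.two_alt_cycles_exist)
  moreover have "V = set C1 \<union> set C2"
    using G C1(2) C2(2) by (simp add: in_colored_sum_def)
  ultimately show ?thesis
    using two_alt_cycles.alt_cycle_through_vertex[OF cyc] by auto
qed

end
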